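(* Let $K\ge1$, $\Delta_0,B>0$, and for $k=1,\dots,K$ let $m_k\ge0$, $v_k\ge0$. Let $\mathcal{G}\subset\mathbb{R}^K$ be the set of $\mathbf{r}$ for which there exist $\mathbf{p},\mathbf{y}\in\mathbb{R}^K$ and a $2K\times2K$ real matrix $\mathbf{H}=\begin{bmatrix}\mathbf{H}^{xx}&\mathbf{H}^{x\phi}\\(\mathbf{H}^{x\phi})^{\rm T}&\mathbf{H}^{\phi\phi}\end{bmatrix}$ (with $K\times K$ blocks) satisfying, for every $k$: $r_k\ge0$; $r_k\le\Delta_0B\,p_k\log_2(1+y_k/p_k)$; $0\le p_k\le1$; $\sum_kp_k\le1$; $H^{x\phi}_{k,k}=y_k-p_km_k$; $H^{\phi\phi}_{k,k}=v_k$ and $H^{\phi\phi}_{i,j}=0$ for $i\neq j$; $H^{xx}_{k,k}\le p_k-p_k^2$; $\sum_{i,j}H^{xx}_{i,j}\le\sum_ip_i-(\sum_ip_i)^2$; $\mathbf{H}\succeq0$. Then $\mathcal{G}$ is bounded.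
   Context: $\mathbf{H}\succeq0$ means $\mathbf{H}$ is positive semidefinite. In the rate constraint the function $p\log_2(1+y/p)$ is understood as its perspective (value $0$ at $p=0$). *)

theory Defs
  imports "HOL-Analysis.Analysis"
begin

definition psd :: "('i::finite \<Rightarrow> 'i \<Rightarrow> real) \<Rightarrow> bool" where
  "psd M \<longleftrightarrow> (\<forall>i j. M i j = M j i) \<and>
     (\<forall>x :: 'i \<Rightarrow> real. 0 \<le> (\<Sum>i\<in>UNIV. \<Sum>j\<in>UNIV. x i * M i j * x j))"

text \<open>The rate constraint r \<le> c * p * log2(1 + y/p), with the left-hand side understood
  as the perspective function: value 0 at p = 0; for p > 0 the logarithm must be
  defined, i.e. 1 + y/p > 0.\<close>
definition rate_ok :: "real \<Rightarrow> real \<Rightarrow> real \<Rightarrow> real \<Rightarrow> bool" where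
  "rate_ok c r p y \<longleftrightarrow>
     (if p = 0 then r \<le> 0
      else 0 < 1 + y / p \<and> r \<le> c * (p * log 2 (1 + y / p)))"

definition region_G ::
  "real \<Rightarrow> real \<Rightarrow> real ^ 'k::finite \<Rightarrow> real ^ 'k \<Rightarrow> (real ^ 'k) set" where
  "region_G \<Delta>0 B m v = {r. \<exists>(p :: real ^ 'k) (y :: real ^ 'k)
        (H :: ('k + 'k) \<Rightarrow> ('k + 'k) \<Rightarrow> real).
     (\<forall>k. 0 \<le> r $ k) \<and>
     (\<forall>k. rate_ok (\<Delta>0 * B) (r $ k) (p $ k) (y $ k)) \<and>
     (\<forall>k. 0 \<le> p $ k \<and> p $ k \<le> 1) \<and>
     (\<Sum>k\<in>UNIV. p $ k) \<le> 1 \<and>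
     (\<forall>i j. H (Inr i) (Inl j) = H (Inl j) (Inr i)) \<and>
     (\<forall>k. H (Inl k) (Inr k) = y $ k - p $ k * m $ k) \<and>
     (\<forall>k. H (Inr k) (Inr k) = v $ k) \<and>
     (\<forall>i j. i \<noteq> j \<longrightarrow> H (Inr i) (Inr j) = 0) \<and>
     (\<forall>k. H (Inl k) (Inl k) \<le> p $ k - (p $ k)\<^sup>2) \<and>
     (\<Sum>i\<in>UNIV. \<Sum>j\<in>UNIV. H (Inl i) (Inl j))
        \<le> (\<Sum>i\<in>UNIV. p $ i) - (\<Sum>i\<in>UNIV. p $ i)\<^sup>2 \<and>
     psd H}"

end

theory Submission
  imports Defs
begin

text \<open>The \<open>2\<times>2\<close> principal minor of \<open>H\<close> on the coordinates \<open>x\<^sub>k, \<phi>\<^sub>k\<close> is positive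
  semidefinite, so the cross entry \<open>y\<^sub>k - p\<^sub>k m\<^sub>k\<close> is at most the mean of the diagonal entries
  \<open>p\<^sub>k - p\<^sub>k\<^sup>2 \<le> 1\<close> and \<open>v\<^sub>k\<close>; this bounds \<open>y\<^sub>k\<close> from above. Since \<open>ln (1 + t) \<le> t\<close>, the
  perspective \<open>p log\<^sub>2 (1 + y/p)\<close> is at most \<open>y / ln 2\<close>, so every rate \<open>r\<^sub>k\<close> lies in a fixed
  interval and the region sits inside a box.\<close>

lemma psd_quadratic_form_diff_units:
  fixes M :: "'i::finite \<Rightarrow> 'i \<Rightarrow> real"
  assumes "a \<noteq> b"
  defines "x \<equiv> \<lambda>i. of_bool (i = a) - of_bool (i = b)"
  shows "(\<Sum>i\<in>UNIV. \<Sum>j\<in>UNIV. x i * M i j * x j) = M a a - M a b - M b a + M b b"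
proof -
  have row: "(\<Sum>j\<in>UNIV. x i * M i j * x j) = x i * (M i a - M i b)" for i
  proof -
    have "(\<Sum>j\<in>UNIV. x i * M i j * x j) = x i * (\<Sum>j\<in>UNIV. M i j * x j)"
      by (simp add: sum_distrib_left mult.assoc)
    also have "(\<Sum>j\<in>UNIV. M i j * x j) = M i a - M i b"
      by (simp add: x_def right_diff_distrib sum_subtractf)
    finally show ?thesis .
  qed
  have "(\<Sum>i\<in>UNIV. x i * (M i a - M i b)) = (M a a - M a b) - (M b a - M b b)"
    by (simp add: x_def left_diff_distrib sum_subtractf)
  then show ?thesis
    by (simp add: row)
qed

lemma psd_offdiag_le:
  fixes M :: "'i::finite \<Rightarrow> 'i \<Rightarrow> real"
  assumes "psd M" and "a \<noteq> b"
  shows "2 * M a b \<le> M a a + M b b"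
proof -
  have form_nonneg: "0 \<le> (\<Sum>i\<in>UNIV. \<Sum>j\<in>UNIV. x i * M i j * x j)" for x
    using assms(1) unfolding psd_def by blast
  have "0 \<le> M a a - M a b - M b a + M b b"
    using form_nonneg[of "\<lambda>i. of_bool (i = a) - of_bool (i = b)"]
    unfolding psd_quadratic_form_diff_units[OF assms(2)] .
  moreover have "M b a = M a b"
    using assms(1) unfolding psd_def by blast
  ultimately show ?thesis by linarith
qed

lemma perspective_log_le:
  fixes p y :: real
  assumes "0 < p" and "0 < 1 + y / p"
  shows "p * log 2 (1 + y / p) \<le> y / ln 2"
proof -
  have "ln (1 + y / p) \<le> y / p"
    using ln_add_one_self_le_self2[of "y / p"] assms(2) by simp
  then have "p * ln (1 + y / p) \<le> y"
    using assms(1) by (simp add: field_simps)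
  then show ?thesis
    by (simp add: log_def divide_right_mono)
qed

lemma rate_ok_le:
  assumes "rate_ok c r p y" and "0 \<le> c" and "0 \<le> p" and "y \<le> Y" and "0 \<le> Y"
  shows "r \<le> c * Y / ln 2"
proof (cases "p = 0")
  case True
  moreover have "0 \<le> c * Y / ln 2"
    using assms(2,5) by simp
  ultimately show ?thesis
    using assms(1) unfolding rate_ok_def by simp
next
  case False
  then have "0 < p" and "0 < 1 + y / p" and r: "r \<le> c * (p * log 2 (1 + y / p))"
    using assms(1,3) unfolding rate_ok_def by auto
  have "p * log 2 (1 + y / p) \<le> y / ln 2"
    by (rule perspective_log_le) fact+
  also have "\<dots> \<le> Y / ln 2"
    using assms(4) by (simp add: divide_right_mono)
  finally have "c * (p * log 2 (1 + y / p)) \<le> c * (Y / ln 2)"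
    using assms(2) by (rule mult_left_mono)
  then show ?thesis
    using r by simp
qed

lemma region_G_component_bound:
  fixes r m v :: "real ^ 'k::finite"
  assumes "r \<in> region_G \<Delta>0 B m v" and "0 \<le> \<Delta>0 * B"
    and "0 \<le> m $ k" and "0 \<le> v $ k"
  shows "0 \<le> r $ k \<and> r $ k \<le> \<Delta>0 * B * (m $ k + (1 + v $ k) / 2) / ln 2"
proof -
  obtain p y and H :: "'k + 'k \<Rightarrow> 'k + 'k \<Rightarrow> real" where
    "\<forall>k. 0 \<le> r $ k" and rate: "\<forall>k. rate_ok (\<Delta>0 * B) (r $ k) (p $ k) (y $ k)"
    and p: "\<forall>k. 0 \<le> p $ k \<and> p $ k \<le> 1"
    and cross: "\<forall>k. H (Inl k) (Inr k) = y $ k - p $ k * m $ k"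
    and diag_v: "\<forall>k. H (Inr k) (Inr k) = v $ k"
    and diag_p: "\<forall>k. H (Inl k) (Inl k) \<le> p $ k - (p $ k)\<^sup>2"
    and "psd H"
    using assms(1) unfolding region_G_def mem_Collect_eq by (elim exE conjE) blast
  have "2 * H (Inl k) (Inr k) \<le> H (Inl k) (Inl k) + H (Inr k) (Inr k)"
    using \<open>psd H\<close> by (rule psd_offdiag_le) simp
  moreover have p_k: "0 \<le> p $ k" "p $ k \<le> 1"
    using p by auto
  moreover have "p $ k * m $ k \<le> m $ k"
    using p_k assms(3) by (simp add: mult_left_le_one_le)
  moreover have "p $ k - (p $ k)\<^sup>2 \<le> 1"
    using p_k(2) zero_le_power2[of "p $ k"] by linarith
  ultimately have "2 * y $ k \<le> 2 * m $ k + 1 + v $ k"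
    using cross[rule_format, of k] diag_v[rule_format, of k] diag_p[rule_format, of k]
    by linarith
  then have "y $ k \<le> m $ k + (1 + v $ k) / 2"
    by (simp add: field_simps)
  moreover have "0 \<le> m $ k + (1 + v $ k) / 2"
    using assms(3,4) by simp
  ultimately have "r $ k \<le> \<Delta>0 * B * (m $ k + (1 + v $ k) / 2) / ln 2"
    by (rule rate_ok_le[OF rate[rule_format] assms(2) p_k(1)])
  then show ?thesis
    using \<open>\<forall>k. 0 \<le> r $ k\<close> by blast
qed

theorem mainTheorem7:
  fixes \<Delta>0 B :: real and m v :: "real ^ 'k::finite"
  assumes "\<Delta>0 > 0" and "B > 0"
    and "\<forall>k. m $ k \<ge> 0" and "\<forall>k. v $ k \<ge> 0"
  shows "bounded (region_G \<Delta>0 B m v)"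
proof -
  let ?corner = "\<chi> k. \<Delta>0 * B * (m $ k + (1 + v $ k) / 2) / ln 2"
  have scale: "0 \<le> \<Delta>0 * B"
    using assms(1,2) by simp
  have "region_G \<Delta>0 B m v \<subseteq> cbox 0 ?corner"
  proof
    fix r assume r: "r \<in> region_G \<Delta>0 B m v"
    have "0 \<le> r $ k \<and> r $ k \<le> ?corner $ k" for k
      using region_G_component_bound[OF r scale] assms(3,4) by simp
    then show "r \<in> cbox 0 ?corner"
      by (simp add: mem_box_cart)
  qed
  then show ?thesis
    using bounded_cbox bounded_subset by blast
qed

end
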